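(* Let $G_H$ be a finite undirected multigraph (parallel edges allowed, no self-loops) with vertex set $V$, whose edge set is partitioned as $E = S \sqcup S^c$ into secure edges $S$ and insecure edges $S^c$, and let $0 < p_J^{S^c} \le p_J^{S} \le p_I$ be real costs. Assign weight $p_J^{S}$ to every secure edge and weight $p_J^{S^c}$ to every insecure edge, and let $C^*$ be a cut of minimum total weight among all cuts of $G_H$ containing at least one insecure edge. Then the attack $(C^*, J, I)$ with $I=\{e\}$ for some insecure edge $e\in C^*$ and $J = C^*\setminus\{e\}$ is an optimal (minimum-cost) hidden generalized attack.
   Context: For a nonempty proper subset $U \subsetneq V$, the cut $\delta(U)$ is the set of edges with exactly one endpoint in $U$; a cut of $G_H$ is any set of this form. ($G_H$ models a power grid's measurement graph: vertices are buses plus a reference bus, edges are measurements.) The costs are: $p_J^{S^c}$ per jammed insecure edge, $p_J^S$ per jammed secure edge, $p_I$ per insecure edge with injected data. A generalized attack is a triple $(C,J,I)$ where $C$ is a cut, $J \subseteq C$ is the set of jammed edges, and $I \subseteq (C \cap S^c)\setminus J$ is a nonempty set of injected edges; its cost is $p_J^{S}|J\cap S| + p_J^{S^c}|J \cap S^c| + p_I |I|$. The attack is hidden if $I \cup J = C$. An optimal hidden generalized attack is a hidden generalized attack of minimum cost among all hidden generalized attacks. *)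

theory Defs
  imports Complex_Main
begin

text \<open>A finite undirected multigraph: vertex set V, edge set E (edges are abstract
 objects, so parallel edges are allowed), each edge e has endpoints src e and tgt e
 (orientation irrelevant), no self-loops.\<close>

definition multigraph :: "'v set \<Rightarrow> 'e set \<Rightarrow> ('e \<Rightarrow> 'v) \<Rightarrow> ('e \<Rightarrow> 'v) \<Rightarrow> bool" where
  "multigraph V E src tgt \<longleftrightarrow> finite V \<and> finite E \<and>
     (\<forall>e\<in>E. src e \<in> V \<and> tgt e \<in> V \<and> src e \<noteq> tgt e)"

definition cut_set :: "'e set \<Rightarrow> ('e \<Rightarrow> 'v) \<Rightarrow> ('e \<Rightarrow> 'v) \<Rightarrow> 'v set \<Rightarrow> 'e set" where
  "cut_set E src tgt U = {e\<in>E. (src e \<in> U) \<noteq> (tgt e \<in> U)}"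

definition is_cut :: "'v set \<Rightarrow> 'e set \<Rightarrow> ('e \<Rightarrow> 'v) \<Rightarrow> ('e \<Rightarrow> 'v) \<Rightarrow> 'e set \<Rightarrow> bool" where
  "is_cut V E src tgt C \<longleftrightarrow> (\<exists>U. U \<noteq> {} \<and> U \<subset> V \<and> C = cut_set E src tgt U)"

definition gen_attack :: "'v set \<Rightarrow> 'e set \<Rightarrow> ('e \<Rightarrow> 'v) \<Rightarrow> ('e \<Rightarrow> 'v) \<Rightarrow> 'e set
    \<Rightarrow> 'e set \<Rightarrow> 'e set \<Rightarrow> 'e set \<Rightarrow> bool" where
  "gen_attack V E src tgt S C J I \<longleftrightarrow> is_cut V E src tgt C \<and> J \<subseteq> C \<and>
     I \<subseteq> (C \<inter> (E - S)) - J \<and> I \<noteq> {}"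

definition hidden_gen_attack :: "'v set \<Rightarrow> 'e set \<Rightarrow> ('e \<Rightarrow> 'v) \<Rightarrow> ('e \<Rightarrow> 'v) \<Rightarrow> 'e set
    \<Rightarrow> 'e set \<Rightarrow> 'e set \<Rightarrow> 'e set \<Rightarrow> bool" where
  "hidden_gen_attack V E src tgt S C J I \<longleftrightarrow> gen_attack V E src tgt S C J I \<and> I \<union> J = C"

definition attack_cost :: "'e set \<Rightarrow> 'e set \<Rightarrow> real \<Rightarrow> real \<Rightarrow> real \<Rightarrow> 'e set \<Rightarrow> 'e set \<Rightarrow> real" where
  "attack_cost E S pJS pJSc pI J I =
     pJS * real (card (J \<inter> S)) + pJSc * real (card (J \<inter> (E - S))) + pI * real (card I)"

definition optimal_hidden_gen_attack :: "'v set \<Rightarrow> 'e set \<Rightarrow> ('e \<Rightarrow> 'v) \<Rightarrow> ('e \<Rightarrow> 'v) \<Rightarrow> 'e set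
    \<Rightarrow> real \<Rightarrow> real \<Rightarrow> real \<Rightarrow> 'e set \<Rightarrow> 'e set \<Rightarrow> 'e set \<Rightarrow> bool" where
  "optimal_hidden_gen_attack V E src tgt S pJS pJSc pI C J I \<longleftrightarrow>
     hidden_gen_attack V E src tgt S C J I \<and>
     (\<forall>C' J' I'. hidden_gen_attack V E src tgt S C' J' I' \<longrightarrow>
        attack_cost E S pJS pJSc pI J I \<le> attack_cost E S pJS pJSc pI J' I')"

definition cut_weight :: "'e set \<Rightarrow> real \<Rightarrow> real \<Rightarrow> 'e set \<Rightarrow> real" where
  "cut_weight S pJS pJSc C = (\<Sum>e\<in>C. if e \<in> S then pJS else pJSc)"

end

theory Submission
  imports Defs
begin

text \<open>In a hidden attack every edge of the cut is either jammed or injected. So its cost is the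
  weight of the cut plus an extra pI - pJSc for each injected (necessarily insecure) edge. At least
  one edge must be injected, so every hidden attack costs at least the minimum weight of a cut with
  an insecure edge plus pI - pJSc, and the attack injecting exactly one edge of C* attains this.\<close>

lemma cut_weight_eq:
  assumes "finite C"
  shows "cut_weight S pJS pJSc C = pJS * real (card (C \<inter> S)) + pJSc * real (card (C - S))"
proof -
  have "cut_weight S pJS pJSc C =
      (\<Sum>e\<in>C \<inter> S. if e \<in> S then pJS else pJSc) + (\<Sum>e\<in>C - S. if e \<in> S then pJS else pJSc)"
    unfolding cut_weight_def using assms
    by (metis (no_types, lifting) Int_Diff_Un Int_Diff_disjoint finite_Diff finite_Int
        sum.union_disjoint)
  then show ?thesis by simp
qed

lemma is_cut_subset: "is_cut V E src tgt C \<Longrightarrow> C \<subseteq> E"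
  unfolding is_cut_def cut_set_def by auto

lemma attack_cost_hidden_gen_attack:
  assumes "hidden_gen_attack V E src tgt S C J I" and "finite E"
  shows "attack_cost E S pJS pJSc pI J I = cut_weight S pJS pJSc C + (pI - pJSc) * real (card I)"
proof -
  have I_sub: "I \<subseteq> (C \<inter> (E - S)) - J" and C_eq: "I \<union> J = C" and "is_cut V E src tgt C"
    using assms(1) unfolding hidden_gen_attack_def gen_attack_def by auto
  then have C_sub: "C \<subseteq> E" using is_cut_subset by blast
  have "finite C" using C_sub assms(2) finite_subset by blast
  then have "finite I" "finite J" using C_eq by auto
  have secure: "C \<inter> S = J \<inter> S" using C_eq I_sub by auto
  have "C - S = (J \<inter> (E - S)) \<union> I" using C_eq I_sub C_sub by auto
  moreover have "card ((J \<inter> (E - S)) \<union> I) = card (J \<inter> (E - S)) + card I"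
    using I_sub \<open>finite I\<close> \<open>finite J\<close> by (intro card_Un_disjoint) auto
  ultimately have insecure: "card (C - S) = card (J \<inter> (E - S)) + card I" by simp
  show ?thesis
    unfolding attack_cost_def cut_weight_eq[OF \<open>finite C\<close>] secure insecure
    by (simp add: algebra_simps)
qed

theorem theorem4:
  fixes V :: "'v set" and E :: "'e set" and src tgt :: "'e \<Rightarrow> 'v"
    and S :: "'e set" and pJS pJSc pI :: real and Cstar :: "'e set" and e :: 'e
  assumes "multigraph V E src tgt"
    and "S \<subseteq> E"
    and "0 < pJSc" and "pJSc \<le> pJS" and "pJS \<le> pI"
    and "is_cut V E src tgt Cstar" and "Cstar \<inter> (E - S) \<noteq> {}"
    and "\<forall>C. is_cut V E src tgt C \<and> C \<inter> (E - S) \<noteq> {} \<longrightarrow>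
            cut_weight S pJS pJSc Cstar \<le> cut_weight S pJS pJSc C"
    and "e \<in> Cstar \<inter> (E - S)"
  shows "optimal_hidden_gen_attack V E src tgt S pJS pJSc pI Cstar (Cstar - {e}) {e}"
proof -
  have "finite E" using assms(1) unfolding multigraph_def by auto
  have hidden: "hidden_gen_attack V E src tgt S Cstar (Cstar - {e}) {e}"
    unfolding hidden_gen_attack_def gen_attack_def using assms(6,9) by auto
  have "attack_cost E S pJS pJSc pI (Cstar - {e}) {e} \<le> attack_cost E S pJS pJSc pI J I"
    if "hidden_gen_attack V E src tgt S C J I" for C J I
  proof -
    have "I \<noteq> {}" "I \<subseteq> C \<inter> (E - S)" "is_cut V E src tgt C"
      using that unfolding hidden_gen_attack_def gen_attack_def by auto
    then have "cut_weight S pJS pJSc Cstar \<le> cut_weight S pJS pJSc C" using assms(8) by blast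
    moreover have "1 \<le> real (card I)"
      using \<open>I \<noteq> {}\<close> \<open>I \<subseteq> C \<inter> (E - S)\<close> \<open>finite E\<close>
      by (metis One_nat_def Suc_leI card_gt_0_iff finite_subset le_infE of_nat_1 of_nat_mono
          Diff_subset subset_trans)
    then have "pI - pJSc \<le> (pI - pJSc) * real (card I)"
      using assms(4,5) by (simp add: mult_le_cancel_left1)
    ultimately show ?thesis
      using attack_cost_hidden_gen_attack[OF hidden \<open>finite E\<close>]
        attack_cost_hidden_gen_attack[OF that \<open>finite E\<close>] by simp
  qed
  then show ?thesis unfolding optimal_hidden_gen_attack_def using hidden by blast
qed

end
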